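(* Let $G_{n\times n}$ denote the $n\times n$ square grid graph and $\pi_{\mathrm{opt}}(G_{n\times n})$ its optimal pebbling number. Then $$\liminf_{n\to\infty}\frac{n^2}{\pi_{\mathrm{opt}}(G_{n\times n})}\ \ge\ \frac{7}{2};$$ that is, there are solvable pebble distributions on arbitrarily large square grids whose covering ratios converge to $3.5$.
   Context: A pebble distribution on a graph $G$ is a function $D:V(G)\to\mathbb{N}$; its size is $|D|=\sum_v D(v)$. A pebbling move along an edge $vu$ with $D(v)\ge 2$ removes two pebbles from $v$ and adds one pebble to $u$. A vertex $v$ is reachable under $D$ if $D(v)\ge 1$ or there is a sequence of pebbling moves whose last move places a pebble on $v$. $D$ is solvable if every vertex is reachable. The covering ratio of $D$ is the number of reachable vertices divided by $|D|$. The optimal pebbling number $\pi_{\mathrm{opt}}(G)$ is the minimum size of a solvable distribution on $G$. The $n\times n$ grid $G_{n\times n}$ is the Cartesian product of two paths on $n$ vertices. *)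

theory Defs
  imports Complex_Main "HOL-Library.Extended_Real" "HOL-Library.Liminf_Limsup"
begin

text \<open>A graph is given by a finite vertex set V and a symmetric adjacency
relation E. A pebble distribution is a function D :: 'a => nat that vanishes
outside V.\<close>

definition size_dist :: "'a set \<Rightarrow> ('a \<Rightarrow> nat) \<Rightarrow> nat" where
  "size_dist V D = (\<Sum>v\<in>V. D v)"

definition peb_move :: "'a set \<Rightarrow> ('a \<Rightarrow> 'a \<Rightarrow> bool) \<Rightarrow> ('a \<Rightarrow> nat) \<Rightarrow> ('a \<Rightarrow> nat) \<Rightarrow> bool" where
  "peb_move V E D D' \<longleftrightarrow> (\<exists>v u. v \<in> V \<and> u \<in> V \<and> E v u \<and> D v \<ge> 2 \<and>
       D' = (D(v := D v - 2))(u := D u + 1))"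

definition reachable :: "'a set \<Rightarrow> ('a \<Rightarrow> 'a \<Rightarrow> bool) \<Rightarrow> ('a \<Rightarrow> nat) \<Rightarrow> 'a \<Rightarrow> bool" where
  "reachable V E D v \<longleftrightarrow> D v \<ge> 1 \<or>
     (\<exists>D1 w. (peb_move V E)\<^sup>*\<^sup>* D D1 \<and> w \<in> V \<and> E w v \<and> D1 w \<ge> 2)"

definition solvable :: "'a set \<Rightarrow> ('a \<Rightarrow> 'a \<Rightarrow> bool) \<Rightarrow> ('a \<Rightarrow> nat) \<Rightarrow> bool" where
  "solvable V E D \<longleftrightarrow> (\<forall>v\<in>V. reachable V E D v)"

definition opt_pebbling :: "'a set \<Rightarrow> ('a \<Rightarrow> 'a \<Rightarrow> bool) \<Rightarrow> nat" where
  "opt_pebbling V E = (LEAST k. \<exists>D. (\<forall>v. v \<notin> V \<longrightarrow> D v = 0) \<and>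
        solvable V E D \<and> size_dist V D = k)"

definition grid_V :: "nat \<Rightarrow> (nat \<times> nat) set" where
  "grid_V n = {0..<n} \<times> {0..<n}"

definition grid_E :: "(nat \<times> nat) \<Rightarrow> (nat \<times> nat) \<Rightarrow> bool" where
  "grid_E p q \<longleftrightarrow> (fst p = fst q \<and> (snd p + 1 = snd q \<or> snd q + 1 = snd p)) \<or>
                  (snd p = snd q \<and> (fst p + 1 = fst q \<or> fst q + 1 = fst p))"

end

theory Submission
  imports Defs "HOL-Real_Asymp.Real_Asymp"
begin

text \<open>Four pebbles on a vertex reach the 13 vertices within distance two of it, and two stacks
of four whose paths of length two meet at a vertex u can together put two pebbles on u and so
reach a neighbour of u. Put stacks of four on the index-14 sublattice x + 8y = 0 (mod 14): for
ten of the fourteen residues of x + 8y a vertex lies within distance two of a stack, and for the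
other four it is reached by a pair of stacks, so every 4 pebbles cover 14 vertices. One extra
pebble on each vertex of a frame of width three handles the boundary at cost O(n), whence the
optimal pebbling number of the n x n grid is at most 2n^2/7 + O(n).\<close>

lemma peb_move_along:
  assumes "v \<in> V" "u \<in> V" "E v u" "2 \<le> D v"
  shows "peb_move V E D (D(v := D v - 2, u := D u + 1))"
  using assms unfolding peb_move_def by blast

lemma peb_moves_twice:
  assumes "a \<in> V" "p \<in> V" "E a p" "a \<noteq> p" "4 \<le> D a"
  shows "(peb_move V E)\<^sup>*\<^sup>* D (D(a := D a - 4, p := D p + 2))"
proof -
  let ?D1 = "D(a := D a - 2, p := D p + 1)"
  have "peb_move V E D ?D1" using assms by (intro peb_move_along) auto
  moreover have "peb_move V E ?D1 (?D1(a := ?D1 a - 2, p := ?D1 p + 1))"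
    using assms by (intro peb_move_along) auto
  moreover have "?D1(a := ?D1 a - 2, p := ?D1 p + 1) = D(a := D a - 4, p := D p + 2)"
    using assms by auto
  ultimately show ?thesis by (metis converse_rtranclp_into_rtranclp r_into_rtranclp)
qed

lemma peb_moves_along_two_edges:
  assumes "a \<in> V" "p \<in> V" "u \<in> V" "E a p" "E p u" "distinct [a, p, u]" "4 \<le> D a"
  shows "(peb_move V E)\<^sup>*\<^sup>* D (D(a := D a - 4, u := D u + 1))"
proof -
  let ?D2 = "D(a := D a - 4, p := D p + 2)"
  have "(peb_move V E)\<^sup>*\<^sup>* D ?D2" using assms by (intro peb_moves_twice) auto
  moreover have "peb_move V E ?D2 (?D2(p := ?D2 p - 2, u := ?D2 u + 1))"
    using assms by (intro peb_move_along) auto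
  moreover have "?D2(p := ?D2 p - 2, u := ?D2 u + 1) = D(a := D a - 4, u := D u + 1)"
    using assms by auto
  ultimately show ?thesis by (metis rtranclp.rtrancl_into_rtrancl)
qed

lemma reachable_if_pebble: "1 \<le> D v \<Longrightarrow> reachable V E D v"
  unfolding reachable_def by simp

lemma reachable_if_neighbour_pair: "w \<in> V \<Longrightarrow> E w v \<Longrightarrow> 2 \<le> D w \<Longrightarrow> reachable V E D v"
  unfolding reachable_def by blast

lemma reachable_at_distance_two:
  assumes "a \<in> V" "u \<in> V" "E a u" "E u v" "a \<noteq> u" "4 \<le> D a"
  shows "reachable V E D v"
  using assms peb_moves_twice[of a V u E D] unfolding reachable_def by fastforce

lemma reachable_from_two_stacks:
  assumes "a \<in> V" "p \<in> V" "u \<in> V" "b \<in> V" "q \<in> V"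
    and "E a p" "E p u" "E b q" "E q u" "E u v"
    and "distinct [a, p, u, b, q]" "4 \<le> D a" "4 \<le> D b"
  shows "reachable V E D v"
proof -
  let ?D' = "D(a := D a - 4, u := D u + 1)"
  have "(peb_move V E)\<^sup>*\<^sup>* D ?D'" using assms by (intro peb_moves_along_two_edges) auto
  moreover have "(peb_move V E)\<^sup>*\<^sup>* ?D' (?D'(b := ?D' b - 4, u := ?D' u + 1))"
    using assms by (intro peb_moves_along_two_edges[where p = q]) auto
  ultimately have "(peb_move V E)\<^sup>*\<^sup>* D (?D'(b := ?D' b - 4, u := ?D' u + 1))" by simp
  moreover have "2 \<le> (?D'(b := ?D' b - 4, u := ?D' u + 1)) u" by simp
  ultimately show ?thesis using assms(3,10) unfolding reachable_def by blast
qed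

lemma peb_moves_from_zero: "(peb_move V E)\<^sup>*\<^sup>* (\<lambda>_. 0) D \<Longrightarrow> D = (\<lambda>_. 0)"
  by (induction rule: rtranclp_induct) (auto simp: peb_move_def)

lemma not_reachable_zero: "\<not> reachable V E (\<lambda>_. 0) v"
  unfolding reachable_def using peb_moves_from_zero by fastforce

lemma opt_pebbling_le:
  assumes "\<forall>v. v \<notin> V \<longrightarrow> D v = 0" "solvable V E D"
  shows "opt_pebbling V E \<le> size_dist V D"
  unfolding opt_pebbling_def using assms by (intro Least_le) blast

lemma opt_pebbling_pos:
  assumes "finite V" "V \<noteq> {}" "\<forall>v. v \<notin> V \<longrightarrow> D v = 0" "solvable V E D"
  shows "0 < opt_pebbling V E"
proof (rule ccontr)
  assume "\<not> 0 < opt_pebbling V E"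
  then obtain D0 where D0: "\<forall>v. v \<notin> V \<longrightarrow> D0 v = 0" "solvable V E D0" "size_dist V D0 = 0"
    using LeastI_ex[of "\<lambda>k. \<exists>D. (\<forall>v. v \<notin> V \<longrightarrow> D v = 0) \<and> solvable V E D \<and> size_dist V D = k"] assms(3,4)
    unfolding opt_pebbling_def by auto
  then have "D0 = (\<lambda>_. 0)" using assms(1) by (auto simp: size_dist_def)
  moreover obtain v where "v \<in> V" using assms(2) by blast
  ultimately show False using D0(2) not_reachable_zero unfolding solvable_def by metis
qed

lemma card_residue_class_le:
  fixes n m t r :: nat
  shows "card ({..<n} \<inter> {x. (x + t) mod m = r}) \<le> n div m + 1"
proof -
  let ?S = "{..<n} \<inter> {x. (x + t) mod m = r}"
  have inj: "inj_on (\<lambda>x. x div m) ?S"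
  proof (rule inj_onI)
    fix x y assume "x \<in> ?S" "y \<in> ?S" and div_eq: "x div m = y div m"
    then obtain q1 q2 where "x + t + m * q1 = y + t + m * q2"
      using nat_mod_eq_iff[of "x + t" m "y + t"] by auto
    then have "x mod m = y mod m"
      unfolding nat_mod_eq_iff by (intro exI[of _ q1] exI[of _ q2]) simp
    with div_eq show "x = y" by (metis div_mult_mod_eq)
  qed
  then have "card ?S = card ((\<lambda>x. x div m) ` ?S)" by (simp add: card_image)
  also have "\<dots> \<le> card {..n div m}" by (intro card_mono) (auto intro: div_le_mono)
  finally show ?thesis by simp
qed

lemma card_border_le:
  fixes n k :: nat
  shows "card ({..<n} \<inter> {x. x < k \<or> n \<le> x + k}) \<le> 2 * k"
proof -
  have "card ({..<n} \<inter> {x. x < k \<or> n \<le> x + k}) \<le> card ({..<k} \<union> {n - k..<n})"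
    by (intro card_mono) auto
  also have "\<dots> \<le> card {..<k} + card {n - k..<n}" by (rule card_Un_le)
  also have "\<dots> \<le> 2 * k" by simp
  finally show ?thesis .
qed

definition grid_frame :: "nat \<Rightarrow> nat \<times> nat \<Rightarrow> bool" where
  "grid_frame n p \<longleftrightarrow> fst p < 3 \<or> snd p < 3 \<or> n \<le> fst p + 3 \<or> n \<le> snd p + 3"

definition stack_site :: "nat \<times> nat \<Rightarrow> bool" where
  "stack_site p \<longleftrightarrow> (fst p + 8 * snd p) mod 14 = 0"

text \<open>The frame has width three because interior vertices use stacks at coordinate offset up to
three, which then still lie in the grid.\<close>

definition grid_dist :: "nat \<Rightarrow> nat \<times> nat \<Rightarrow> nat" where
  "grid_dist n p =
     (if p \<in> grid_V n then of_bool (grid_frame n p) + 4 * of_bool (stack_site p) else 0)"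

lemma grid_dist_stack: "x + 8 * y = 14 * j \<Longrightarrow> x < n \<Longrightarrow> y < n \<Longrightarrow> 4 \<le> grid_dist n (x, y)"
  by (simp add: grid_dist_def grid_V_def stack_site_def)

lemma grid_dist_frame: "x < n \<Longrightarrow> y < n \<Longrightarrow> grid_frame n (x, y) \<Longrightarrow> 1 \<le> grid_dist n (x, y)"
  by (simp add: grid_dist_def grid_V_def)

lemma grid_interior_reachable_near_stack:
  assumes "3 \<le> x" "3 \<le> y" "x + 3 < n" "y + 3 < n"
    and "x + 8 * y = 14 * k + r" "r \<in> {0, 1, 6, 8, 13}"
  shows "reachable (grid_V n) grid_E (grid_dist n) (x, y)"
proof -
  from assms(6) consider "r = 0" | "r = 1" | "r = 6" | "r = 8" | "r = 13" by fastforce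
  then show ?thesis
  proof cases
    case 1
    then have "4 \<le> grid_dist n (x, y)" using assms by (intro grid_dist_stack[where j = k]) linarith+
    then show ?thesis by (intro reachable_if_pebble) simp
  next
    case 2
    then have "4 \<le> grid_dist n (x - 1, y)" using assms by (intro grid_dist_stack[where j = k]) linarith+
    then show ?thesis using assms
      by (intro reachable_if_neighbour_pair[of "(x - 1, y)"]) (auto simp: grid_V_def grid_E_def)
  next
    case 3
    then have "4 \<le> grid_dist n (x, y + 1)" using assms
      by (intro grid_dist_stack[where j = "k + 1"]) (simp_all add: distrib_left)
    then show ?thesis using assms
      by (intro reachable_if_neighbour_pair[of "(x, y + 1)"]) (auto simp: grid_V_def grid_E_def)
  next
    case 4
    then have "4 \<le> grid_dist n (x, y - 1)" using assms by (intro grid_dist_stack[where j = k]) linarith+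
    then show ?thesis using assms
      by (intro reachable_if_neighbour_pair[of "(x, y - 1)"]) (auto simp: grid_V_def grid_E_def)
  next
    case 5
    then have "4 \<le> grid_dist n (x + 1, y)" using assms
      by (intro grid_dist_stack[where j = "k + 1"]) (simp_all add: distrib_left)
    then show ?thesis using assms
      by (intro reachable_if_neighbour_pair[of "(x + 1, y)"]) (auto simp: grid_V_def grid_E_def)
  qed
qed

lemma grid_interior_reachable_at_distance_two:
  assumes "3 \<le> x" "3 \<le> y" "x + 3 < n" "y + 3 < n"
    and "x + 8 * y = 14 * k + r" "r \<in> {2, 5, 7, 9, 12}"
  shows "reachable (grid_V n) grid_E (grid_dist n) (x, y)"
proof -
  from assms(6) consider "r = 2" | "r = 5" | "r = 7" | "r = 9" | "r = 12" by fastforce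
  then show ?thesis
  proof cases
    case 1
    then have "4 \<le> grid_dist n (x - 2, y)" using assms by (intro grid_dist_stack[where j = k]) linarith+
    then show ?thesis using assms
      by (intro reachable_at_distance_two[of "(x - 2, y)" _ "(x - 1, y)"]) (auto simp: grid_V_def grid_E_def)
  next
    case 2
    then have "4 \<le> grid_dist n (x + 1, y + 1)" using assms
      by (intro grid_dist_stack[where j = "k + 1"]) (simp_all add: distrib_left)
    then show ?thesis using assms
      by (intro reachable_at_distance_two[of "(x + 1, y + 1)" _ "(x + 1, y)"]) (auto simp: grid_V_def grid_E_def)
  next
    case 3
    then have "4 \<le> grid_dist n (x + 1, y - 1)" using assms by (intro grid_dist_stack[where j = k]) linarith+
    then show ?thesis using assms
      by (intro reachable_at_distance_two[of "(x + 1, y - 1)" _ "(x + 1, y)"]) (auto simp: grid_V_def grid_E_def)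
  next
    case 4
    then have "4 \<le> grid_dist n (x - 1, y - 1)" using assms by (intro grid_dist_stack[where j = k]) linarith+
    then show ?thesis using assms
      by (intro reachable_at_distance_two[of "(x - 1, y - 1)" _ "(x - 1, y)"]) (auto simp: grid_V_def grid_E_def)
  next
    case 5
    then have "4 \<le> grid_dist n (x + 2, y)" using assms
      by (intro grid_dist_stack[where j = "k + 1"]) (simp_all add: distrib_left)
    then show ?thesis using assms
      by (intro reachable_at_distance_two[of "(x + 2, y)" _ "(x + 1, y)"]) (auto simp: grid_V_def grid_E_def)
  qed
qed

lemma grid_interior_reachable_from_two_stacks:
  assumes "3 \<le> x" "3 \<le> y" "x + 3 < n" "y + 3 < n"
    and "x + 8 * y = 14 * k + r" "r \<in> {3, 4, 10, 11}"
  shows "reachable (grid_V n) grid_E (grid_dist n) (x, y)"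
proof -
  from assms(6) consider "r = 3" | "r = 4" | "r = 10" | "r = 11" by fastforce
  then show ?thesis
  proof cases
    case 1
    have "4 \<le> grid_dist n (x - 3, y)" using assms 1 by (intro grid_dist_stack[where j = k]) linarith+
    moreover have "4 \<le> grid_dist n (x - 1, y - 2)" using assms 1 by (intro grid_dist_stack[where j = "k - 1"]) linarith+
    ultimately show ?thesis using assms
      by (intro reachable_from_two_stacks[of "(x - 3, y)" _ "(x - 2, y)" "(x - 1, y)" "(x - 1, y - 2)" "(x - 1, y - 1)"])
         (auto simp: grid_V_def grid_E_def)
  next
    case 2
    have "4 \<le> grid_dist n (x + 2, y + 1)" using assms 2
      by (intro grid_dist_stack[where j = "k + 1"]) (simp_all add: distrib_left)
    moreover have "4 \<le> grid_dist n (x, y + 3)" using assms 2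
      by (intro grid_dist_stack[where j = "k + 2"]) (simp_all add: distrib_left)
    ultimately show ?thesis using assms
      by (intro reachable_from_two_stacks[of "(x + 2, y + 1)" _ "(x + 1, y + 1)" "(x, y + 1)" "(x, y + 3)" "(x, y + 2)"])
         (auto simp: grid_V_def grid_E_def)
  next
    case 3
    have "4 \<le> grid_dist n (x - 2, y - 1)" using assms 3 by (intro grid_dist_stack[where j = k]) linarith+
    moreover have "4 \<le> grid_dist n (x, y - 3)" using assms 3 by (intro grid_dist_stack[where j = "k - 1"]) linarith+
    ultimately show ?thesis using assms
      by (intro reachable_from_two_stacks[of "(x - 2, y - 1)" _ "(x - 1, y - 1)" "(x, y - 1)" "(x, y - 3)" "(x, y - 2)"])
         (auto simp: grid_V_def grid_E_def)
  next
    case 4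
    have "4 \<le> grid_dist n (x + 3, y)" using assms 4
      by (intro grid_dist_stack[where j = "k + 1"]) (simp_all add: distrib_left)
    moreover have "4 \<le> grid_dist n (x + 1, y + 2)" using assms 4
      by (intro grid_dist_stack[where j = "k + 2"]) (simp_all add: distrib_left)
    ultimately show ?thesis using assms
      by (intro reachable_from_two_stacks[of "(x + 3, y)" _ "(x + 2, y)" "(x + 1, y)" "(x + 1, y + 2)" "(x + 1, y + 1)"])
         (auto simp: grid_V_def grid_E_def)
  qed
qed

lemma grid_dist_solvable: "solvable (grid_V n) grid_E (grid_dist n)"
  unfolding solvable_def
proof
  fix v assume "v \<in> grid_V n"
  then obtain x y where v: "v = (x, y)" "x < n" "y < n" by (auto simp: grid_V_def)
  show "reachable (grid_V n) grid_E (grid_dist n) v"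
  proof (cases "grid_frame n v")
    case True
    then show ?thesis using v grid_dist_frame[of x n y] by (auto intro: reachable_if_pebble)
  next
    case False
    then have interior: "3 \<le> x" "3 \<le> y" "x + 3 < n" "y + 3 < n" using v by (auto simp: grid_frame_def)
    define r where "r = (x + 8 * y) mod 14"
    have division: "x + 8 * y = 14 * ((x + 8 * y) div 14) + r" unfolding r_def by simp
    have "r < 14" unfolding r_def by simp
    then have "r \<in> {0, 1, 6, 8, 13} \<union> {2, 5, 7, 9, 12} \<union> {3, 4, 10, 11}"
      by (auto simp: numeral_eq_Suc less_Suc_eq)
    then show ?thesis
      using grid_interior_reachable_near_stack[OF interior division]
        grid_interior_reachable_at_distance_two[OF interior division]
        grid_interior_reachable_from_two_stacks[OF interior division]
      unfolding v(1) by blast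
  qed
qed

lemma size_grid_dist: "size_dist (grid_V n) (grid_dist n) \<le> 12 * n + 4 * n * (n div 14 + 1)"
proof -
  define border :: "nat \<Rightarrow> nat" where "border z = of_bool (z < 3 \<or> n \<le> z + 3)" for z
  define stack :: "nat \<Rightarrow> nat \<Rightarrow> nat" where "stack x y = of_bool ((x + 8 * y) mod 14 = 0)" for x y
  have "(\<Sum>z<n. border z) = card ({..<n} \<inter> {z. z < 3 \<or> n \<le> z + 3})"
    unfolding border_def by (rule trans[OF sum_of_bool_eq]) simp_all
  with card_border_le[of n 3] have border_sum: "(\<Sum>z<n. border z) \<le> 6" by simp
  have stack_sum: "(\<Sum>x<n. stack x y) \<le> n div 14 + 1" for y
  proof -
    have "(\<Sum>x<n. stack x y) = card ({..<n} \<inter> {x. (x + 8 * y) mod 14 = 0})"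
      unfolding stack_def by (rule trans[OF sum_of_bool_eq]) simp_all
    with card_residue_class_le show ?thesis by simp
  qed
  have "(\<Sum>x<n. \<Sum>y<n. stack x y) = (\<Sum>y<n. \<Sum>x<n. stack x y)" by (rule sum.swap)
  also have "\<dots> \<le> (\<Sum>y<n. n div 14 + 1)" by (intro sum_mono stack_sum)
  finally have stack_total: "(\<Sum>x<n. \<Sum>y<n. stack x y) \<le> n * (n div 14 + 1)" by simp
  have "size_dist (grid_V n) (grid_dist n) = (\<Sum>x<n. \<Sum>y<n. grid_dist n (x, y))"
    by (simp add: size_dist_def grid_V_def sum.cartesian_product atLeast0LessThan)
  also have "\<dots> \<le> (\<Sum>x<n. \<Sum>y<n. border x + border y + 4 * stack x y)"
    by (intro sum_mono) (auto simp: grid_dist_def grid_V_def grid_frame_def stack_site_def border_def stack_def)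
  also have "\<dots> = n * (\<Sum>x<n. border x) + n * (\<Sum>y<n. border y) + 4 * (\<Sum>x<n. \<Sum>y<n. stack x y)"
    by (simp add: sum.distrib sum_distrib_left)
  also have "\<dots> \<le> n * 6 + n * 6 + 4 * (n * (n div 14 + 1))"
    using border_sum stack_total by (intro add_mono mult_left_mono) auto
  finally show ?thesis by (simp add: algebra_simps)
qed

lemma opt_pebbling_grid_le: "7 * opt_pebbling (grid_V n) grid_E \<le> n * (2 * n + 112)"
proof -
  have "opt_pebbling (grid_V n) grid_E \<le> size_dist (grid_V n) (grid_dist n)"
    by (rule opt_pebbling_le[OF _ grid_dist_solvable]) (simp add: grid_dist_def)
  also have "\<dots> \<le> 12 * n + 4 * n * (n div 14 + 1)" by (rule size_grid_dist)
  finally have "7 * opt_pebbling (grid_V n) grid_E \<le> n * 112 + 2 * n * (14 * (n div 14))"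
    by (simp add: algebra_simps)
  also have "\<dots> \<le> n * 112 + 2 * n * n" by simp
  finally show ?thesis by (simp add: algebra_simps)
qed

lemma grid_covering_ratio_ge:
  assumes "0 < n"
  shows "7 * real n / (2 * real n + 112) \<le> real (n^2) / real (opt_pebbling (grid_V n) grid_E)"
proof -
  define p where "p = real (opt_pebbling (grid_V n) grid_E)"
  have "0 < opt_pebbling (grid_V n) grid_E"
    using assms by (intro opt_pebbling_pos[OF _ _ _ grid_dist_solvable])
      (auto simp: grid_V_def grid_dist_def)
  then have "0 < p" by (simp add: p_def)
  have "7 * p \<le> real n * (2 * real n + 112)"
    using of_nat_mono[OF opt_pebbling_grid_le[of n]] by (simp add: p_def)
  then have "7 * real n * p \<le> real (n^2) * (2 * real n + 112)"
    using mult_left_mono[of _ _ "real n"] by (fastforce simp: power2_eq_square mult.assoc)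
  with \<open>0 < p\<close> show ?thesis
    unfolding p_def[symmetric] by (simp add: divide_simps)
qed

theorem mainTheorem2:
  shows "liminf (\<lambda>n::nat. ereal (real (n^2) / real (opt_pebbling (grid_V n) grid_E)))
           \<ge> ereal (7/2)"
proof -
  have "((\<lambda>x::real. 7 * x / (2 * x + 112)) \<longlongrightarrow> 7/2) at_top" by real_asymp
  then have "(\<lambda>n::nat. ereal (7 * real n / (2 * real n + 112))) \<longlonglongrightarrow> ereal (7/2)"
    unfolding lim_ereal by (rule filterlim_compose[OF _ filterlim_real_sequentially])
  then have "liminf (\<lambda>n::nat. ereal (7 * real n / (2 * real n + 112))) = ereal (7/2)"
    by (intro lim_imp_Liminf) simp
  moreover have "liminf (\<lambda>n::nat. ereal (7 * real n / (2 * real n + 112)))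
      \<le> liminf (\<lambda>n::nat. ereal (real (n^2) / real (opt_pebbling (grid_V n) grid_E)))"
    using grid_covering_ratio_ge
    by (intro Liminf_mono) (auto simp: eventually_sequentially intro!: exI[of _ 1])
  ultimately show ?thesis by simp
qed

end
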